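(* Let $\mathbf{Z}=\alpha\mathbf{N}+\beta\mathbf{U}$ (a sequence in $n$), where $\alpha,\beta\in\mathbb{R}$, $\mathbf{N}=\mathbf{N}^{(n)}$ is semi norm-ergodic noise with effective variance $\sigma^2_{\mathbf{N}}=\frac{1}{n}\mathbb{E}\|\mathbf{N}\|^2$, and $\mathbf{U}=\mathbf{U}^{(n)}$ is a dither statistically independent of $\mathbf{N}$, uniformly distributed over the Voronoi region $\mathcal{V}$ of a lattice $\Lambda=\Lambda^{(n)}$, where the sequence $\Lambda^{(n)}$ is good for MSE quantization; let $\sigma^2_{\mathbf{U}}=\frac1n\mathbb{E}\|\mathbf{U}\|^2$. Then the sequence of random vectors $\mathbf{Z}$ is semi norm-ergodic.
   Context: For a lattice $\Lambda\subset\mathbb{R}^n$: the Voronoi region $\mathcal{V}$ is the set of points whose nearest lattice point (ties broken systematically) is $\mathbf{0}$; $V(\Lambda)$ its volume; $\sigma^2(\Lambda)=\frac1n\mathbb{E}\|\mathbf{U}\|^2$ for $\mathbf{U}$ uniform on $\mathcal{V}$; $G(\Lambda)=\sigma^2(\Lambda)/V(\Lambda)^{2/n}$. A sequence $\Lambda^{(n)}$ is good for MSE quantization if $\lim_{n\to\infty}G(\Lambda^{(n)})=\frac{1}{2\pi e}$. A sequence of random vectors $\mathbf{Z}^{(n)}\in\mathbb{R}^n$ with effective variance $\sigma^2_{\mathbf{Z}}=\frac1n\mathbb{E}\|\mathbf{Z}^{(n)}\|^2<\infty$ is semi norm-ergodic if for every $\epsilon>0,\delta>0$ and all $n$ large enough,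 $\Pr\big(\|\mathbf{Z}^{(n)}\|>\sqrt{(1+\delta)n\sigma^2_{\mathbf{Z}}}\big)\le\epsilon$. *)

theory Defs
  imports "HOL-Probability.Probability"
begin

text \<open>Vectors of R^n are represented as functions nat => real; only the components
  i < n are relevant. The measurable space / Lebesgue measure on R^n is the
  product measure of lborel over {..<n}.\<close>

definition Rn :: "nat \<Rightarrow> (nat \<Rightarrow> real) measure" where
  "Rn n = PiM {..<n} (\<lambda>_. lborel)"

definition vnorm :: "nat \<Rightarrow> (nat \<Rightarrow> real) \<Rightarrow> real" where
  "vnorm n x = sqrt (\<Sum>i<n. (x i)\<^sup>2)"

text \<open>B j is the j-th generator vector (j < n); they must be linearly independent in R^n.\<close>
definition lattice_basis :: "nat \<Rightarrow> (nat \<Rightarrow> nat \<Rightarrow> real) \<Rightarrow> bool" where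
  "lattice_basis n B \<longleftrightarrow>
     (\<forall>c :: nat \<Rightarrow> real. (\<forall>i<n. (\<Sum>j<n. c j * B j i) = 0) \<longrightarrow> (\<forall>j<n. c j = 0))"

definition lattice :: "nat \<Rightarrow> (nat \<Rightarrow> nat \<Rightarrow> real) \<Rightarrow> (nat \<Rightarrow> real) set" where
  "lattice n B = {restrict (\<lambda>i. \<Sum>j<n. real_of_int (k j) * B j i) {..<n} | k :: nat \<Rightarrow> int. True}"

text \<open>Voronoi region of the lattice point 0 (closed cell; ties form a null set).\<close>
definition voronoi :: "nat \<Rightarrow> (nat \<Rightarrow> real) set \<Rightarrow> (nat \<Rightarrow> real) set" where
  "voronoi n L = {x \<in> space (Rn n). \<forall>l\<in>L. vnorm n x \<le> vnorm n (\<lambda>i. x i - l i)}"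

definition cell_volume :: "nat \<Rightarrow> (nat \<Rightarrow> real) set \<Rightarrow> real" where
  "cell_volume n L = measure (Rn n) (voronoi n L)"

definition second_moment :: "nat \<Rightarrow> (nat \<Rightarrow> real) set \<Rightarrow> real" where
  "second_moment n L =
     (1 / real n) * (integral\<^sup>L (uniform_measure (Rn n) (voronoi n L)) (\<lambda>x. (vnorm n x)\<^sup>2))"

definition NSM :: "nat \<Rightarrow> (nat \<Rightarrow> real) set \<Rightarrow> real" where
  "NSM n L = second_moment n L / (cell_volume n L) powr (2 / real n)"

definition good_for_MSE :: "(nat \<Rightarrow> nat \<Rightarrow> nat \<Rightarrow> real) \<Rightarrow> bool" where
  "good_for_MSE B \<longleftrightarrow> (\<forall>n. lattice_basis n (B n)) \<and>
     (\<lambda>n. NSM n (lattice n (B n))) \<longlonglongrightarrow> 1 / (2 * pi * exp 1)"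

definition eff_var :: "'a measure \<Rightarrow> nat \<Rightarrow> ('a \<Rightarrow> nat \<Rightarrow> real) \<Rightarrow> real" where
  "eff_var M n Z = (1 / real n) * (integral\<^sup>L M (\<lambda>\<omega>. (vnorm n (Z \<omega>))\<^sup>2))"

definition semi_norm_ergodic :: "(nat \<Rightarrow> 'a measure) \<Rightarrow> (nat \<Rightarrow> 'a \<Rightarrow> nat \<Rightarrow> real) \<Rightarrow> bool" where
  "semi_norm_ergodic M Z \<longleftrightarrow>
     (\<forall>n. Z n \<in> M n \<rightarrow>\<^sub>M Rn n \<and> integrable (M n) (\<lambda>\<omega>. (vnorm n (Z n \<omega>))\<^sup>2)) \<and>
     (\<forall>\<epsilon>>0. \<forall>\<delta>>0. eventually (\<lambda>n.
        measure (M n) {\<omega> \<in> space (M n).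
          vnorm n (Z n \<omega>) > sqrt ((1 + \<delta>) * real n * eff_var (M n) n (Z n))} \<le> \<epsilon>) sequentially)"

end

theory Submission
  imports Defs "Jordan_Normal_Form.Determinant"
begin

hide_const (open) Lattice.lattice

text \<open>Expanding, \<open>|Z|^2 = \<alpha>^2 |N|^2 + \<beta>^2 |U|^2 + 2 \<alpha> \<beta> \<langle>N, U\<rangle>\<close>; the dither is symmetric,
  hence centred, and independent of the noise, so \<open>\<sigma>\<^sub>Z^2 = \<alpha>^2 \<sigma>\<^sub>N^2 + \<beta>^2 \<sigma>\<^sub>U^2\<close>. The probability
  that \<open>U\<close> falls into a set is at most its volume divided by the cell volume \<open>V\<close>, and
  \<open>\<sigma>\<^sub>U^2 = G V^(2/n)\<close> with \<open>2 \<pi> e G \<rightarrow> 1\<close>. Chernoff bounds for the volume of balls and caps of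
  squared radius \<open>k n \<sigma>\<^sub>U^2\<close> with \<open>k < 1\<close> therefore give probabilities of order
  \<open>(2 \<pi> e k G)^(n/2) \<rightarrow> 0\<close>. Hence \<open>|U|^2\<close> is rarely below \<open>(1 - \<gamma>) n \<sigma>\<^sub>U^2\<close>, thus, having
  mean \<open>n \<sigma>\<^sub>U^2\<close>, rarely above \<open>(1 + \<delta>') n \<sigma>\<^sub>U^2\<close>; and, conditionally on \<open>N\<close>, \<open>U\<close> rarely has an
  inner product with \<open>N\<close> of relative size \<open>\<eta>\<close>. Off these events and the rare event where \<open>|N|\<close> is
  large, \<open>|Z|^2 \<le> (1 + \<eta>) (1 + \<delta>') n \<sigma>\<^sub>Z^2\<close>.\<close>

lemma vnorm_sq: "(vnorm n x)\<^sup>2 = (\<Sum>i<n. (x i)\<^sup>2)"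
  unfolding vnorm_def by (simp add: sum_nonneg)

lemma vnorm_cong: "(\<And>i. i < n \<Longrightarrow> x i = y i) \<Longrightarrow> vnorm n x = vnorm n y"
  unfolding vnorm_def by (intro arg_cong[where f=sqrt] sum.cong) auto

lemma measurable_Rn_component: "i < n \<Longrightarrow> (\<lambda>x. x i) \<in> borel_measurable (Rn n)"
  unfolding Rn_def by simp

lemma borel_measurable_sum_sq [measurable]: "(\<lambda>x. \<Sum>i<n. (x i)\<^sup>2) \<in> borel_measurable (Rn n)"
  unfolding Rn_def by measurable

lemma borel_measurable_vnorm [measurable]: "vnorm n \<in> borel_measurable (Rn n)"
proof -
  have "(\<lambda>x. sqrt (\<Sum>i<n. (x i)\<^sup>2)) \<in> borel_measurable (Rn n)" by measurable
  then show ?thesis unfolding vnorm_def[abs_def] .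
qed

lemma product_sigma_finite_lborel: "product_sigma_finite (\<lambda>_::nat. lborel :: real measure)"
  unfolding product_sigma_finite_def by (simp add: lborel.sigma_finite_measure_axioms)

definition neg_Rn :: "nat \<Rightarrow> (nat \<Rightarrow> real) \<Rightarrow> nat \<Rightarrow> real" where
  "neg_Rn n x = restrict (\<lambda>i. - x i) {..<n}"

lemma measurable_neg_Rn [measurable]: "neg_Rn n \<in> Rn n \<rightarrow>\<^sub>M Rn n"
  unfolding neg_Rn_def Rn_def by measurable

lemma neg_Rn_neg_Rn: "x \<in> space (Rn n) \<Longrightarrow> neg_Rn n (neg_Rn n x) = x"
  unfolding neg_Rn_def Rn_def by (auto simp: space_PiM PiE_def extensional_def)

lemma distr_neg_Rn: "distr (Rn n) (Rn n) (neg_Rn n) = Rn n"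
proof -
  interpret product_sigma_finite "\<lambda>_::nat. lborel :: real measure"
    by (rule product_sigma_finite_lborel)
  have lborel_neg: "emeasure lborel (uminus -` A) = emeasure lborel A"
    if "A \<in> sets (lborel :: real measure)" for A
    using that by (subst (2) lborel_distr_uminus[symmetric]) (simp add: emeasure_distr)
  show ?thesis unfolding Rn_def
  proof (rule PiM_eqI)
    fix A assume A: "\<And>i. i \<in> {..<n} \<Longrightarrow> A i \<in> sets (lborel :: real measure)"
    have "neg_Rn n -` Pi\<^sub>E {..<n} A \<inter> space (Pi\<^sub>M {..<n} (\<lambda>_. lborel))
        = Pi\<^sub>E {..<n} (\<lambda>i. uminus -` A i)"
      unfolding neg_Rn_def by (auto simp: space_PiM PiE_def Pi_def extensional_def)
    moreover have "Pi\<^sub>E {..<n} A \<in> sets (Pi\<^sub>M {..<n} (\<lambda>_. lborel :: real measure))"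
      using A by (intro sets_PiM_I_finite) auto
    ultimately have "emeasure (distr (Pi\<^sub>M {..<n} (\<lambda>_. lborel)) (Pi\<^sub>M {..<n} (\<lambda>_. lborel)) (neg_Rn n))
        (Pi\<^sub>E {..<n} A) = emeasure (Pi\<^sub>M {..<n} (\<lambda>_. lborel)) (Pi\<^sub>E {..<n} (\<lambda>i. uminus -` A i))"
      using measurable_neg_Rn[of n] unfolding Rn_def by (subst emeasure_distr) auto
    also have "\<dots> = (\<Prod>i\<in>{..<n}. emeasure lborel (uminus -` A i))"
      using A by (subst emeasure_PiM) (auto intro: measurable_sets[of uminus lborel lborel, simplified])
    also have "\<dots> = (\<Prod>i\<in>{..<n}. emeasure lborel (A i))"
      using A by (intro prod.cong) (auto simp: lborel_neg)
    finally show "emeasure (distr (Pi\<^sub>M {..<n} (\<lambda>_. lborel)) (Pi\<^sub>M {..<n} (\<lambda>_. lborel)) (neg_Rn n))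
        (Pi\<^sub>E {..<n} A) = (\<Prod>i\<in>{..<n}. emeasure lborel (A i))" .
  qed simp_all
qed

section \<open>Volume bounds for balls and caps\<close>

lemma nn_integral_exp_quadratic:
  fixes t c :: real
  assumes t: "t > 0"
  shows "(\<integral>\<^sup>+y. ennreal (exp (- t * y\<^sup>2 + c * y)) \<partial>lborel) = ennreal (sqrt (pi / t) * exp (c\<^sup>2 / (4 * t)))"
proof -
  define \<sigma> where "\<sigma> = sqrt (1 / (2 * t))"
  define \<mu> where "\<mu> = c / (2 * t)"
  have \<sigma>: "\<sigma> > 0" "\<sigma>\<^sup>2 = 1 / (2 * t)" using t by (simp_all add: \<sigma>_def)
  \<comment> \<open>completing the square turns the integrand into a multiple of a normal density\<close>
  have density: "exp (- t * y\<^sup>2 + c * y) = sqrt (pi / t) * exp (c\<^sup>2 / (4 * t)) * normal_density \<mu> \<sigma> y" for y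
  proof -
    have "-(y - \<mu>)\<^sup>2 / (2 * \<sigma>\<^sup>2) = -(y - \<mu>)\<^sup>2 * t" using \<sigma> by simp
    also have "\<dots> = - t * y\<^sup>2 + c * y - c\<^sup>2 / (4 * t)"
      using t by (simp add: \<mu>_def field_simps power2_eq_square)
    finally have "normal_density \<mu> \<sigma> y = exp (- t * y\<^sup>2 + c * y - c\<^sup>2 / (4 * t)) / sqrt (pi / t)"
      using \<sigma> unfolding normal_density_def by simp
    moreover have "sqrt (pi / t) > 0" using t by simp
    ultimately show ?thesis using t by (simp add: exp_diff)
  qed
  have "(\<integral>\<^sup>+y. ennreal (exp (- t * y\<^sup>2 + c * y)) \<partial>lborel)
      = ennreal (sqrt (pi / t) * exp (c\<^sup>2 / (4 * t))) * (\<integral>\<^sup>+y. ennreal (normal_density \<mu> \<sigma> y) \<partial>lborel)"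
    unfolding density using t
    by (subst nn_integral_cmult[symmetric]) (auto intro!: nn_integral_cong simp: ennreal_mult)
  also have "(\<integral>\<^sup>+y. ennreal (normal_density \<mu> \<sigma> y) \<partial>lborel) = 1"
    using \<sigma> by (subst nn_integral_eq_integral)
      (auto simp: integrable_normal_density integral_normal_density)
  finally show ?thesis by simp
qed

text \<open>Chernoff bound: the indicator of the set is dominated by
  \<open>exp (t (A - |x|^2) + s (\<langle>x, w\<rangle> - b))\<close>, whose integral factorises into one-dimensional
  Gaussian integrals.\<close>
lemma emeasure_ball_inter_halfspace_le:
  fixes t s A b :: real and w :: "nat \<Rightarrow> real"
  assumes t: "t > 0" and s: "s \<ge> 0"
  shows "emeasure (Rn n) {x\<in>space (Rn n). (\<Sum>i<n. (x i)\<^sup>2) \<le> A \<and> b \<le> (\<Sum>i<n. x i * w i)}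
    \<le> ennreal (exp (t * A - s * b + s\<^sup>2 * (\<Sum>i<n. (w i)\<^sup>2) / (4 * t)) * sqrt (pi / t) ^ n)"
proof -
  interpret product_sigma_finite "\<lambda>_::nat. lborel :: real measure"
    by (rule product_sigma_finite_lborel)
  define S where "S = {x\<in>space (Rn n). (\<Sum>i<n. (x i)\<^sup>2) \<le> A \<and> b \<le> (\<Sum>i<n. x i * w i)}"
  define g where "g = (\<lambda>i y. ennreal (exp (- t * y\<^sup>2 + (s * w i) * y)))"
  have "S \<in> sets (Rn n)" unfolding S_def Rn_def by measurable
  then have "emeasure (Rn n) S = (\<integral>\<^sup>+x. indicator S x \<partial>Rn n)"
    by simp
  also have "\<dots> \<le> (\<integral>\<^sup>+x. ennreal (exp (t * A - s * b)) * (\<Prod>i\<in>{..<n}. g i (x i)) \<partial>Rn n)"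
  proof (rule nn_integral_mono)
    fix x
    have "(\<Sum>i<n. - t * (x i)\<^sup>2 + (s * w i) * x i) = - t * (\<Sum>i<n. (x i)\<^sup>2) + s * (\<Sum>i<n. x i * w i)"
      by (simp add: sum.distrib sum_distrib_left mult_ac sum_negf sum_subtractf)
    moreover have "0 \<le> t * (A - (\<Sum>i<n. (x i)\<^sup>2)) + s * ((\<Sum>i<n. x i * w i) - b)" if "x \<in> S"
      using that t s unfolding S_def by auto
    ultimately have "1 \<le> exp (t * A - s * b) * exp (\<Sum>i<n. - t * (x i)\<^sup>2 + (s * w i) * x i)" if "x \<in> S"
      using that by (simp add: mult_exp_exp algebra_simps)
    moreover have "(\<Prod>i\<in>{..<n}. g i (x i)) = ennreal (exp (\<Sum>i<n. - t * (x i)\<^sup>2 + (s * w i) * x i))"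
      unfolding g_def by (simp add: exp_sum prod_ennreal)
    ultimately show "indicator S x \<le> ennreal (exp (t * A - s * b)) * (\<Prod>i\<in>{..<n}. g i (x i))"
      by (auto simp: indicator_def ennreal_mult[symmetric] ennreal_1[symmetric] simp del: ennreal_1
          intro!: ennreal_leI)
  qed
  also have "\<dots> = ennreal (exp (t * A - s * b)) * (\<Prod>i\<in>{..<n}. integral\<^sup>N lborel (g i))"
    unfolding Rn_def g_def
    by (subst nn_integral_cmult, measurable) (subst product_nn_integral_prod, auto)
  also have "\<dots> = ennreal (exp (t * A - s * b)) * (\<Prod>i\<in>{..<n}. ennreal (sqrt (pi / t) * exp ((s * w i)\<^sup>2 / (4 * t))))"
    unfolding g_def using nn_integral_exp_quadratic[OF t] by simp
  also have "\<dots> = ennreal (exp (t * A - s * b + s\<^sup>2 * (\<Sum>i<n. (w i)\<^sup>2) / (4 * t)) * sqrt (pi / t) ^ n)"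
    using t
    by (simp add: prod_ennreal ennreal_mult[symmetric] prod.distrib exp_sum[symmetric] exp_add
        sum_divide_distrib[symmetric] sum_distrib_left power_mult_distrib mult_ac)
  finally show ?thesis unfolding S_def .
qed

text \<open>The value of the Chernoff bound at the optimal parameter \<open>t = n / (2 a)\<close>.\<close>
lemma exp_mult_sqrt_pi_power_eq:
  fixes a :: real
  assumes a: "a > 0" and n: "n > 0"
  shows "exp (real n / (2 * a) * a) * sqrt (pi / (real n / (2 * a))) ^ n
       = (2 * pi * exp 1 * a / real n) powr (real n / 2)"
proof -
  have pos: "2 * pi * a / real n > 0" using a n by simp
  have "sqrt (pi / (real n / (2 * a))) ^ n = ((2 * pi * a / real n) powr (1/2)) ^ n"
    using a n by (simp add: powr_half_sqrt field_simps)
  also have "\<dots> = (2 * pi * a / real n) powr (real n / 2)"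
    using pos n by (subst powr_power) auto
  finally have "sqrt (pi / (real n / (2 * a))) ^ n = (2 * pi * a / real n) powr (real n / 2)" .
  moreover have "exp (real n / (2 * a) * a) = exp 1 powr (real n / 2)"
    using a by (simp add: powr_def)
  ultimately show ?thesis
    using pos by (simp add: powr_mult[symmetric] mult_ac)
qed

lemma emeasure_ball_le:
  assumes A: "A > 0" and n: "n > 0"
  shows "emeasure (Rn n) {x\<in>space (Rn n). (\<Sum>i<n. (x i)\<^sup>2) \<le> A}
    \<le> ennreal ((2 * pi * exp 1 * A / real n) powr (real n / 2))"
proof -
  have t: "real n / (2 * A) > 0" using A n by simp
  have "emeasure (Rn n) {x\<in>space (Rn n). (\<Sum>i<n. (x i)\<^sup>2) \<le> A}
      \<le> ennreal (exp (real n / (2 * A) * A) * sqrt (pi / (real n / (2 * A))) ^ n)"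
    using emeasure_ball_inter_halfspace_le[OF t, of 0 n A 0 "\<lambda>_. 0"] by simp
  then show ?thesis by (simp only: exp_mult_sqrt_pi_power_eq[OF A n])
qed

lemma emeasure_ball_inter_halfspace_unit_le:
  assumes n: "n > 0" and w: "(\<Sum>i<n. (w i)\<^sup>2) = 1" and b: "0 \<le> b" "b\<^sup>2 < A"
  shows "emeasure (Rn n) {x\<in>space (Rn n). (\<Sum>i<n. (x i)\<^sup>2) \<le> A \<and> b \<le> (\<Sum>i<n. x i * w i)}
    \<le> ennreal ((2 * pi * exp 1 * (A - b\<^sup>2) / real n) powr (real n / 2))"
proof -
  define t where "t = real n / (2 * (A - b\<^sup>2))"
  have t: "t > 0" using b n by (simp add: t_def)
  have "t * A - 2 * t * b * b + (2 * t * b)\<^sup>2 * (\<Sum>i<n. (w i)\<^sup>2) / (4 * t) = t * (A - b\<^sup>2)"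
    using t w by (simp add: field_simps power2_eq_square)
  then have "emeasure (Rn n) {x\<in>space (Rn n). (\<Sum>i<n. (x i)\<^sup>2) \<le> A \<and> b \<le> (\<Sum>i<n. x i * w i)}
      \<le> ennreal (exp (t * (A - b\<^sup>2)) * sqrt (pi / t) ^ n)"
    using emeasure_ball_inter_halfspace_le[OF t, of "2 * t * b" n A b w] t b by simp
  also have "exp (t * (A - b\<^sup>2)) * sqrt (pi / t) ^ n
      = (2 * pi * exp 1 * (A - b\<^sup>2) / real n) powr (real n / 2)"
    unfolding t_def by (rule exp_mult_sqrt_pi_power_eq) (use b n in auto)
  finally show ?thesis .
qed

text \<open>The set is covered by two opposite caps.\<close>
lemma emeasure_ball_inter_slab_compl_le:
  assumes n: "n > 0" and w: "(\<Sum>i<n. (w i)\<^sup>2) = 1" and b: "0 \<le> b" "b\<^sup>2 < A"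
  shows "emeasure (Rn n) {x\<in>space (Rn n). (\<Sum>i<n. (x i)\<^sup>2) \<le> A \<and> b < \<bar>\<Sum>i<n. x i * w i\<bar>}
    \<le> ennreal (2 * (2 * pi * exp 1 * (A - b\<^sup>2) / real n) powr (real n / 2))"
proof -
  define cap where "cap v = {x\<in>space (Rn n). (\<Sum>i<n. (x i)\<^sup>2) \<le> A \<and> b \<le> (\<Sum>i<n. x i * v i)}" for v
  define c where "c = (2 * pi * exp 1 * (A - b\<^sup>2) / real n) powr (real n / 2)"
  have "{x\<in>space (Rn n). (\<Sum>i<n. (x i)\<^sup>2) \<le> A \<and> b < \<bar>\<Sum>i<n. x i * w i\<bar>} \<subseteq> cap w \<union> cap (\<lambda>i. - w i)"
    by (auto simp: cap_def sum_negf abs_if)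
  then have "emeasure (Rn n) {x\<in>space (Rn n). (\<Sum>i<n. (x i)\<^sup>2) \<le> A \<and> b < \<bar>\<Sum>i<n. x i * w i\<bar>}
      \<le> emeasure (Rn n) (cap w) + emeasure (Rn n) (cap (\<lambda>i. - w i))"
    by (intro order.trans[OF emeasure_mono emeasure_subadditive]) (auto simp: cap_def Rn_def)
  also have "\<dots> \<le> ennreal c + ennreal c"
    using emeasure_ball_inter_halfspace_unit_le[OF n _ b, of w] emeasure_ball_inter_halfspace_unit_le[OF n _ b, of "\<lambda>i. - w i"] w
    unfolding cap_def c_def by (intro add_mono) simp_all
  finally show ?thesis by (simp add: c_def ennreal_plus[symmetric] del: ennreal_plus)
qed

section \<open>The Voronoi cell of a lattice\<close>

text \<open>Compare the distances from a cell point to \<open>0\<close> and to the lattice points \<open>\<plusminus>b\<^sub>j\<close>.\<close>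
lemma voronoi_abs_inner_basis_le:
  assumes x: "x \<in> voronoi n (lattice n B)" and j: "j < n"
  shows "\<bar>\<Sum>i<n. x i * B j i\<bar> \<le> (\<Sum>i<n. (B j i)\<^sup>2) / 2"
proof -
  have "2 * (c * (\<Sum>i<n. x i * B j i)) \<le> (\<Sum>i<n. (B j i)\<^sup>2)" if c: "c = 1 \<or> c = -1" for c :: real
  proof -
    define k :: "nat \<Rightarrow> int" where "k = (\<lambda>j'. if j' = j then (if c = 1 then 1 else -1) else 0)"
    define l where "l = restrict (\<lambda>i. \<Sum>j'<n. real_of_int (k j') * B j' i) {..<n}"
    have "l \<in> lattice n B" unfolding Defs.lattice_def l_def by blast
    then have "vnorm n x \<le> vnorm n (\<lambda>i. x i - l i)"
      using x unfolding voronoi_def by auto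
    moreover have "l i = c * B j i" if "i < n" for i
      using that c j by (auto simp: l_def k_def if_distrib[of real_of_int] if_distrib[of "\<lambda>r. r * _"]
          sum.delta' cong: if_cong)
    ultimately have "(\<Sum>i<n. (x i)\<^sup>2) \<le> (\<Sum>i<n. (x i - c * B j i)\<^sup>2)"
      unfolding vnorm_def by (simp add: sum_nonneg)
    also have "\<dots> = (\<Sum>i<n. (x i)\<^sup>2) - 2 * (c * (\<Sum>i<n. x i * B j i)) + c\<^sup>2 * (\<Sum>i<n. (B j i)\<^sup>2)"
      by (simp add: power2_diff power_mult_distrib sum.distrib sum_subtractf sum_distrib_left mult_ac)
    finally show ?thesis using c by auto
  qed
  from this[of 1] this[of "-1"] show ?thesis by auto
qed

lemma lattice_basis_left_inverse:
  assumes "lattice_basis n B"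
  obtains C where "\<And>x::nat \<Rightarrow> real. \<And>i. i < n \<Longrightarrow> x i = (\<Sum>j<n. C i j * (\<Sum>k<n. B j k * x k))"
proof -
  define A :: "real mat" where "A = mat n n (\<lambda>(j, i). B j i)"
  have A: "A \<in> carrier_mat n n" "transpose_mat A \<in> carrier_mat n n" unfolding A_def by auto
  have "det (transpose_mat A) \<noteq> 0"
  proof
    assume "det (transpose_mat A) = 0"
    then obtain v where v: "v \<in> carrier_vec n" "v \<noteq> 0\<^sub>v n" "transpose_mat A *\<^sub>v v = 0\<^sub>v n"
      using det_0_iff_vec_prod_zero_field[OF A(2)] by auto
    have "(\<Sum>j<n. v $ j * B j i) = 0" if i: "i < n" for i
    proof -
      have "(transpose_mat A *\<^sub>v v) $ i = (\<Sum>j<n. v $ j * B j i)"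
        using i v(1) by (simp add: A_def scalar_prod_def lessThan_atLeast0 mult.commute)
      then show ?thesis using v(3) i by simp
    qed
    with assms have "\<forall>j<n. v $ j = 0" unfolding lattice_basis_def by blast
    then have "v = 0\<^sub>v n" using v(1) by (intro eq_vecI) auto
    with v(2) show False by simp
  qed
  then have "det A \<noteq> 0" using det_transpose[OF A(1)] by simp
  from det_non_zero_imp_unit[OF A(1) this, of "()"]
  obtain C where C: "C \<in> carrier_mat n n" "C * A = 1\<^sub>m n"
    unfolding Units_def ring_mat_def by auto
  show ?thesis
  proof
    fix x :: "nat \<Rightarrow> real" and i assume i: "i < n"
    have "C *\<^sub>v (A *\<^sub>v vec n x) = (C * A) *\<^sub>v vec n x"
      using assoc_mult_mat_vec[OF C(1) A(1)] by simp
    then have "(C *\<^sub>v (A *\<^sub>v vec n x)) $ i = x i" using C i by simp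
    moreover have "(C *\<^sub>v (A *\<^sub>v vec n x)) $ i = (\<Sum>j<n. C $$ (i, j) * (\<Sum>k<n. B j k * x k))"
      using i C A by (simp add: A_def scalar_prod_def lessThan_atLeast0)
    ultimately show "x i = (\<Sum>j<n. C $$ (i, j) * (\<Sum>k<n. B j k * x k))" by simp
  qed
qed

lemma voronoi_bounded:
  assumes "lattice_basis n B"
  obtains K where "\<And>x. x \<in> voronoi n (lattice n B) \<Longrightarrow> (\<Sum>i<n. (x i)\<^sup>2) \<le> K"
proof -
  obtain C where C: "\<And>x::nat\<Rightarrow>real. \<And>i. i < n \<Longrightarrow> x i = (\<Sum>j<n. C i j * (\<Sum>k<n. B j k * x k))"
    using lattice_basis_left_inverse[OF assms] by blast
  define K where "K i = (\<Sum>j<n. \<bar>C i j\<bar> * ((\<Sum>k<n. (B j k)\<^sup>2) / 2))" for i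
  have "\<bar>x i\<bar> \<le> K i" if x: "x \<in> voronoi n (lattice n B)" and i: "i < n" for x i
  proof -
    have "\<bar>x i\<bar> \<le> (\<Sum>j<n. \<bar>C i j * (\<Sum>k<n. B j k * x k)\<bar>)"
      using C[OF i, of x] sum_abs by metis
    also have "\<dots> \<le> K i"
      unfolding K_def abs_mult using voronoi_abs_inner_basis_le[OF x]
      by (intro sum_mono mult_left_mono) (auto simp: mult.commute)
    finally show ?thesis .
  qed
  then have "(\<Sum>i<n. (x i)\<^sup>2) \<le> (\<Sum>i<n. (K i)\<^sup>2)" if "x \<in> voronoi n (lattice n B)" for x
    using that by (intro sum_mono) (metis abs_ge_zero abs_le_self_iff lessThan_iff order_trans power2_abs power_mono)
  then show ?thesis using that by blast
qed

lemma countable_lattice: "countable (lattice n B)"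
proof -
  have "lattice n B \<subseteq> range (\<lambda>ks::int list. restrict (\<lambda>i. \<Sum>j<n. real_of_int (ks ! j) * B j i) {..<n})"
  proof
    fix l assume "l \<in> lattice n B"
    then obtain k where "l = restrict (\<lambda>i. \<Sum>j<n. real_of_int (k j) * B j i) {..<n}"
      unfolding Defs.lattice_def by blast
    also have "\<dots> = restrict (\<lambda>i. \<Sum>j<n. real_of_int (map k [0..<n] ! j) * B j i) {..<n}"
      by (intro restrict_ext sum.cong) auto
    finally show "l \<in> range (\<lambda>ks::int list. restrict (\<lambda>i. \<Sum>j<n. real_of_int (ks ! j) * B j i) {..<n})"
      by blast
  qed
  then show ?thesis by (rule countable_subset) simp
qed

lemma sets_voronoi [measurable]: "voronoi n (lattice n B) \<in> sets (Rn n)"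
  unfolding voronoi_def
proof (rule sets.sets_Collect_countable_All'[OF _ countable_lattice])
  fix l :: "nat \<Rightarrow> real"
  have "(\<lambda>x. vnorm n (\<lambda>i. x i - l i)) \<in> borel_measurable (Rn n)"
    unfolding vnorm_def Rn_def by measurable
  then show "{x \<in> space (Rn n). vnorm n x \<le> vnorm n (\<lambda>i. x i - l i)} \<in> sets (Rn n)"
    by measurable
qed

lemma neg_Rn_mem_voronoi:
  assumes x: "x \<in> voronoi n (lattice n B)"
  shows "neg_Rn n x \<in> voronoi n (lattice n B)"
proof -
  have "vnorm n (neg_Rn n x) \<le> vnorm n (\<lambda>i. neg_Rn n x i - l i)" if l: "l \<in> lattice n B" for l
  proof -
    obtain k where k: "l = restrict (\<lambda>i. \<Sum>j<n. real_of_int (k j) * B j i) {..<n}"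
      using l unfolding Defs.lattice_def by blast
    define l' where "l' = restrict (\<lambda>i. \<Sum>j<n. real_of_int (- k j) * B j i) {..<n}"
    have "l' \<in> lattice n B"
      unfolding Defs.lattice_def l'_def by (rule CollectI, rule exI[where x="\<lambda>j. - k j"]) simp
    then have "vnorm n x \<le> vnorm n (\<lambda>i. x i - l' i)" using x unfolding voronoi_def by auto
    moreover have "vnorm n (neg_Rn n x) = vnorm n x"
      unfolding vnorm_def neg_Rn_def by simp
    moreover have "vnorm n (\<lambda>i. x i - l' i) = vnorm n (\<lambda>i. - (neg_Rn n x i - l i))"
      by (rule vnorm_cong) (simp add: l'_def k neg_Rn_def sum_negf)
    moreover have "vnorm n (\<lambda>i. - (neg_Rn n x i - l i)) = vnorm n (\<lambda>i. neg_Rn n x i - l i)"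
      unfolding vnorm_def by (simp add: power2_commute)
    ultimately show ?thesis by simp
  qed
  moreover have "neg_Rn n x \<in> space (Rn n)"
    using x measurable_space[OF measurable_neg_Rn] unfolding voronoi_def by auto
  ultimately show ?thesis unfolding voronoi_def by auto
qed

lemma neg_Rn_mem_voronoi_iff:
  "x \<in> space (Rn n) \<Longrightarrow> neg_Rn n x \<in> voronoi n (lattice n B) \<longleftrightarrow> x \<in> voronoi n (lattice n B)"
  using neg_Rn_mem_voronoi[of "neg_Rn n x" n B] neg_Rn_mem_voronoi[of x n B] neg_Rn_neg_Rn by metis

lemma prob_space_uniform_measureD:
  assumes V: "V \<in> sets M" and "prob_space (uniform_measure M V)"
  shows "emeasure M V \<noteq> 0" "emeasure M V \<noteq> \<infinity>"
proof -
  have "emeasure M V / emeasure M V = 1"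
    using prob_space.emeasure_space_1[OF assms(2)] V by (simp add: sets.sets_into_space Int_absorb2)
  then show "emeasure M V \<noteq> 0" "emeasure M V \<noteq> \<infinity>" by (intro notI, simp)+
qed

lemma measure_uniform_measure_le:
  assumes V: "V \<in> sets M" "prob_space (uniform_measure M V)"
    and A: "A \<in> sets M" "emeasure M A \<le> ennreal c" and c: "c \<ge> 0"
  shows "measure (uniform_measure M V) A \<le> c / measure M V"
proof -
  have "measure (uniform_measure M V) A = measure M (V \<inter> A) / measure M V"
    using prob_space_uniform_measureD[OF V] A by simp
  moreover have "emeasure M (V \<inter> A) \<le> emeasure M A"
    using A by (intro emeasure_mono) auto
  with A have "emeasure M (V \<inter> A) \<le> ennreal c" by order
  then have "measure M (V \<inter> A) \<le> c"
    unfolding measure_def by (intro enn2real_leI c)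
  ultimately show ?thesis by (simp add: divide_right_mono)
qed

lemma distr_uniform_measure_neg_Rn:
  assumes V: "V \<in> sets (Rn n)" and sym: "\<And>x. x \<in> space (Rn n) \<Longrightarrow> neg_Rn n x \<in> V \<longleftrightarrow> x \<in> V"
  shows "distr (uniform_measure (Rn n) V) (Rn n) (neg_Rn n) = uniform_measure (Rn n) V"
proof (rule measure_eqI)
  fix A assume "A \<in> sets (distr (uniform_measure (Rn n) V) (Rn n) (neg_Rn n))"
  then have A: "A \<in> sets (Rn n)" by simp
  have neg: "neg_Rn n \<in> uniform_measure (Rn n) V \<rightarrow>\<^sub>M Rn n"
    by (subst measurable_cong_sets[OF sets_uniform_measure refl]) (rule measurable_neg_Rn)
  have pre: "neg_Rn n -` A \<inter> space (Rn n) \<in> sets (Rn n)"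
    by (rule measurable_sets[OF measurable_neg_Rn A])
  have "V \<inter> (neg_Rn n -` A \<inter> space (Rn n)) = neg_Rn n -` (V \<inter> A) \<inter> space (Rn n)"
  proof (rule Set.set_eqI)
    fix x show "x \<in> V \<inter> (neg_Rn n -` A \<inter> space (Rn n)) \<longleftrightarrow> x \<in> neg_Rn n -` (V \<inter> A) \<inter> space (Rn n)"
      using sym[of x] by blast
  qed
  then have "emeasure (Rn n) (V \<inter> (neg_Rn n -` A \<inter> space (Rn n)))
      = emeasure (distr (Rn n) (Rn n) (neg_Rn n)) (V \<inter> A)"
    using V A by (subst emeasure_distr) auto
  also have "\<dots> = emeasure (Rn n) (V \<inter> A)" by (simp only: distr_neg_Rn)
  finally have eq: "emeasure (Rn n) (V \<inter> (neg_Rn n -` A \<inter> space (Rn n))) = emeasure (Rn n) (V \<inter> A)" .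
  have "emeasure (distr (uniform_measure (Rn n) V) (Rn n) (neg_Rn n)) A
      = emeasure (uniform_measure (Rn n) V) (neg_Rn n -` A \<inter> space (Rn n))"
    using A neg by (subst emeasure_distr) simp_all
  also have "\<dots> = emeasure (uniform_measure (Rn n) V) A"
    using V A pre by (simp only: emeasure_uniform_measure eq)
  finally show "emeasure (distr (uniform_measure (Rn n) V) (Rn n) (neg_Rn n)) A
      = emeasure (uniform_measure (Rn n) V) A" .
qed simp

lemma integral_uniform_measure_component_eq_0:
  assumes V: "V \<in> sets (Rn n)" and sym: "\<And>x. x \<in> space (Rn n) \<Longrightarrow> neg_Rn n x \<in> V \<longleftrightarrow> x \<in> V"
    and i: "i < n"
  shows "(\<integral>x. x i \<partial>uniform_measure (Rn n) V) = 0"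
proof -
  have neg: "neg_Rn n \<in> uniform_measure (Rn n) V \<rightarrow>\<^sub>M Rn n"
    by (subst measurable_cong_sets[OF sets_uniform_measure refl]) (rule measurable_neg_Rn)
  have "(\<integral>x. x i \<partial>uniform_measure (Rn n) V)
      = (\<integral>x. x i \<partial>distr (uniform_measure (Rn n) V) (Rn n) (neg_Rn n))"
    by (simp only: distr_uniform_measure_neg_Rn[OF V sym])
  also have "\<dots> = (\<integral>x. neg_Rn n x i \<partial>uniform_measure (Rn n) V)"
    using neg measurable_Rn_component[OF i] by (subst integral_distr) simp_all
  also have "\<dots> = - (\<integral>x. x i \<partial>uniform_measure (Rn n) V)"
    using i by (simp add: neg_Rn_def)
  finally show ?thesis by simp
qed

text \<open>Compare \<open>X\<close> with the step function \<open>a 1[X > a] + (b - a) 1[X > b]\<close>, where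
  \<open>a = (1 - g) m\<close> and \<open>b = (1 + d) m\<close>, and take expectations.\<close>
lemma (in prob_space) prob_above_mean_le:
  fixes X :: "'a \<Rightarrow> real"
  assumes X: "integrable M X" "\<And>\<omega>. \<omega> \<in> space M \<Longrightarrow> X \<omega> \<ge> 0"
    and m: "expectation X = m" "m > 0" and g: "0 \<le> g" "g \<le> 1" and d: "d > 0"
  shows "prob {\<omega>\<in>space M. X \<omega> > (1 + d) * m} \<le> (g + prob {\<omega>\<in>space M. X \<omega> \<le> (1 - g) * m}) / d"
proof -
  have [measurable]: "X \<in> borel_measurable M" using X by auto
  define a where "a = (1 - g) * m"
  define b where "b = (1 + d) * m"
  define p where "p = prob {\<omega>\<in>space M. X \<omega> \<le> a}"
  define L where "L = {\<omega>\<in>space M. X \<omega> > a}"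
  define H where "H = {\<omega>\<in>space M. X \<omega> > b}"
  have [measurable]: "L \<in> events" "H \<in> events" unfolding L_def H_def by measurable
  have ab: "0 \<le> a" "a < b" using g m d by (auto simp: a_def b_def)
  have int: "integrable M (\<lambda>\<omega>. a * indicator L \<omega> + (b - a) * indicator H \<omega>)"
    by (intro Bochner_Integration.integrable_add integrable_mult_right integrable_real_indicator)
      (auto simp: less_top[symmetric])
  have "expectation (\<lambda>\<omega>. a * indicator L \<omega> + (b - a) * indicator H \<omega>) \<le> expectation X"
  proof (rule integral_mono[OF int X(1)])
    fix \<omega> assume "\<omega> \<in> space M"
    then show "a * indicator L \<omega> + (b - a) * indicator H \<omega> \<le> X \<omega>"
      using ab X(2)[of \<omega>] by (auto simp: L_def H_def indicator_def)
  qed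
  also have "expectation (\<lambda>\<omega>. a * indicator L \<omega> + (b - a) * indicator H \<omega>) = a * prob L + (b - a) * prob H"
    by (subst Bochner_Integration.integral_add)
      (auto intro!: integrable_mult_right integrable_real_indicator simp: less_top[symmetric])
  finally have mean: "a * prob L + (b - a) * prob H \<le> m" using m by simp
  have "space M - L = {\<omega>\<in>space M. X \<omega> \<le> a}" unfolding L_def by auto
  then have "prob L = 1 - p" using prob_compl[of L] unfolding p_def by simp
  with mean have "(d + g) * m * prob H \<le> (g + p) * m - g * p * m"
    unfolding a_def b_def by (simp add: algebra_simps)
  also have "\<dots> \<le> (g + p) * m" using g m by (simp add: p_def)
  finally have "(d + g) * prob H \<le> g + p" using m by simp
  moreover have "g * prob H \<ge> 0" using g by simp
  ultimately have "d * prob H \<le> g + p" by (simp add: distrib_right)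
  then show ?thesis using d unfolding H_def b_def p_def a_def by (simp add: field_simps)
qed

text \<open>By independence the law of \<open>(X, Y)\<close> is a product measure, so this is Fubini's theorem.\<close>
lemma (in prob_space) prob_indep_pair_le:
  assumes X: "X \<in> M \<rightarrow>\<^sub>M MX" and Y: "Y \<in> M \<rightarrow>\<^sub>M MY" and ind: "indep_var MX X MY Y"
    and S: "S \<in> sets (MX \<Otimes>\<^sub>M MY)"
    and bound: "\<And>x. x \<in> space MX \<Longrightarrow> prob {\<omega>\<in>space M. (x, Y \<omega>) \<in> S} \<le> c" and c: "c \<ge> 0"
  shows "prob {\<omega>\<in>space M. (X \<omega>, Y \<omega>) \<in> S} \<le> c"
proof -
  interpret PX: prob_space "distr M MX X" by (rule prob_space_distr[OF X])
  interpret PY: prob_space "distr M MY Y" by (rule prob_space_distr[OF Y])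
  have XY: "(\<lambda>\<omega>. (X \<omega>, Y \<omega>)) \<in> M \<rightarrow>\<^sub>M MX \<Otimes>\<^sub>M MY" using X Y by measurable
  have slice: "emeasure (distr M MY Y) (Pair x -` S) \<le> ennreal c" if x: "x \<in> space MX" for x
  proof -
    have "Pair x -` S \<in> sets MY" using S by (rule sets_Pair1)
    then have "emeasure (distr M MY Y) (Pair x -` S) = prob {\<omega>\<in>space M. (x, Y \<omega>) \<in> S}"
      using Y by (simp add: emeasure_distr emeasure_eq_measure vimage_def Int_def conj_commute)
    then show ?thesis using bound[OF x] by (simp add: ennreal_leI)
  qed
  have "{\<omega>\<in>space M. (X \<omega>, Y \<omega>) \<in> S} = (\<lambda>\<omega>. (X \<omega>, Y \<omega>)) -` S \<inter> space M" by blast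
  then have "prob {\<omega>\<in>space M. (X \<omega>, Y \<omega>) \<in> S} = measure (distr M MX X \<Otimes>\<^sub>M distr M MY Y) S"
    using measure_distr[OF XY S] ind by (simp add: indep_var_distribution_eq)
  also have "\<dots> \<le> c"
  proof -
    have "emeasure (distr M MX X \<Otimes>\<^sub>M distr M MY Y) S
        = (\<integral>\<^sup>+x. emeasure (distr M MY Y) (Pair x -` S) \<partial>distr M MX X)"
      using S by (intro PY.emeasure_pair_measure_alt) simp
    also have "\<dots> \<le> (\<integral>\<^sup>+x. ennreal c \<partial>distr M MX X)"
      using slice by (intro nn_integral_mono) simp
    also have "\<dots> = ennreal c" using PX.emeasure_space_1 by simp
    finally show ?thesis unfolding measure_def by (intro enn2real_leI c)
  qed
  finally show ?thesis .
qed

lemma (in finite_measure) integrable_component_if_integrable_sum_sq: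
  assumes X: "X \<in> M \<rightarrow>\<^sub>M Rn n" and sq: "integrable M (\<lambda>\<omega>. \<Sum>i<n. (X \<omega> i)\<^sup>2)" and i: "i < n"
  shows "integrable M (\<lambda>\<omega>. X \<omega> i)"
proof (rule square_integrable_imp_integrable)
  show Xi: "(\<lambda>\<omega>. X \<omega> i) \<in> borel_measurable M"
    using measurable_compose[OF X measurable_Rn_component[OF i]] .
  show "integrable M (\<lambda>\<omega>. (X \<omega> i)\<^sup>2)"
  proof (rule Bochner_Integration.integrable_bound[OF sq])
    show "AE \<omega> in M. norm ((X \<omega> i)\<^sup>2) \<le> norm (\<Sum>i<n. (X \<omega> i)\<^sup>2)"
      using i by (intro AE_I2) (simp add: sum_nonneg, intro member_le_sum, auto)
  qed (use Xi in measurable)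
qed

locale voronoi_dither = prob_space M
  for M :: "'a measure" and n :: nat and B :: "nat \<Rightarrow> nat \<Rightarrow> real" and U :: "'a \<Rightarrow> nat \<Rightarrow> real" +
  assumes lattice_basis: "lattice_basis n B"
    and measurable_dither [measurable]: "U \<in> M \<rightarrow>\<^sub>M Rn n"
    and distr_dither: "distr M (Rn n) U = uniform_measure (Rn n) (voronoi n (lattice n B))"
begin

lemma prob_space_uniform_voronoi: "prob_space (uniform_measure (Rn n) (voronoi n (lattice n B)))"
  using prob_space_distr[OF measurable_dither] distr_dither by simp

lemma cell_volume_pos: "cell_volume n (lattice n B) > 0"
proof -
  note V = prob_space_uniform_measureD[OF sets_voronoi prob_space_uniform_voronoi]
  then have "measure (Rn n) (voronoi n (lattice n B)) \<noteq> 0"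
    by (simp add: emeasure_eq_ennreal_measure)
  then show ?thesis unfolding cell_volume_def using measure_nonneg by (simp add: order_neq_le_trans)
qed

lemma second_moment_nonneg: "second_moment n (lattice n B) \<ge> 0"
  unfolding second_moment_def by simp

lemma prob_dither_in_le:
  assumes A: "A \<in> sets (Rn n)" "emeasure (Rn n) A \<le> ennreal c" and c: "c \<ge> 0"
  shows "prob {\<omega>\<in>space M. U \<omega> \<in> A} \<le> c / cell_volume n (lattice n B)"
proof -
  have "prob {\<omega>\<in>space M. U \<omega> \<in> A} = measure (distr M (Rn n) U) A"
    using A by (simp add: measure_distr vimage_def Int_def conj_commute)
  also have "\<dots> \<le> c / cell_volume n (lattice n B)"
    unfolding distr_dither cell_volume_def
    by (rule measure_uniform_measure_le[OF sets_voronoi prob_space_uniform_voronoi A c])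
  finally show ?thesis .
qed

text \<open>Since the second moment is \<open>G V^(2/n)\<close>, the volume of a ball of squared radius
  \<open>k n \<sigma>\<^sub>U^2\<close> is comparable to the cell volume exactly when \<open>2 \<pi> e k G \<approx> 1\<close>.\<close>
lemma ball_volume_bound_div_cell_volume:
  assumes n: "n > 0" and k: "k \<ge> 0"
  shows "(2 * pi * exp 1 * (k * (real n * second_moment n (lattice n B))) / real n) powr (real n / 2)
       / cell_volume n (lattice n B) = (k * (2 * pi * exp 1 * NSM n (lattice n B))) powr (real n / 2)"
proof -
  define V where "V = cell_volume n (lattice n B)"
  have V: "V > 0" using cell_volume_pos by (simp add: V_def)
  have G: "NSM n (lattice n B) \<ge> 0"
    unfolding NSM_def using second_moment_nonneg by simp
  have "2 * pi * exp 1 * (k * (real n * second_moment n (lattice n B))) / real n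
      = (k * (2 * pi * exp 1 * NSM n (lattice n B))) * V powr (2 / real n)"
    using n V by (simp add: NSM_def V_def field_simps)
  then have "(2 * pi * exp 1 * (k * (real n * second_moment n (lattice n B))) / real n) powr (real n / 2)
      = (k * (2 * pi * exp 1 * NSM n (lattice n B))) powr (real n / 2) * (V powr (2 / real n)) powr (real n / 2)"
    using k G by (simp add: powr_mult)
  also have "(V powr (2 / real n)) powr (real n / 2) = V"
    using n V by (simp add: powr_powr)
  finally show ?thesis using V by (simp add: V_def)
qed

lemma integrable_dither_sq_norm: "integrable M (\<lambda>\<omega>. \<Sum>i<n. (U \<omega> i)\<^sup>2)"
proof -
  let ?P = "uniform_measure (Rn n) (voronoi n (lattice n B))"
  interpret P: prob_space ?P by (rule prob_space_uniform_voronoi)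
  obtain K where K: "\<And>x. x \<in> voronoi n (lattice n B) \<Longrightarrow> (\<Sum>i<n. (x i)\<^sup>2) \<le> K"
    using voronoi_bounded[OF lattice_basis] by blast
  have "AE x in ?P. x \<in> voronoi n (lattice n B)"
    by (rule AE_uniform_measureI[OF sets_voronoi]) simp
  then have "AE x in ?P. norm (\<Sum>i<n. (x i)\<^sup>2) \<le> K"
    by eventually_elim (use K in \<open>auto simp: sum_nonneg\<close>)
  then have "integrable ?P (\<lambda>x. \<Sum>i<n. (x i)\<^sup>2)"
    by (rule P.integrable_const_bound) simp
  then show ?thesis
    using integrable_distr_eq[OF measurable_dither borel_measurable_sum_sq] distr_dither by simp
qed

lemma integrable_dither_component: "i < n \<Longrightarrow> integrable M (\<lambda>\<omega>. U \<omega> i)"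
  by (rule integrable_component_if_integrable_sum_sq[OF measurable_dither integrable_dither_sq_norm])

lemma expectation_dither_component: "i < n \<Longrightarrow> expectation (\<lambda>\<omega>. U \<omega> i) = 0"
  using integral_distr[OF measurable_dither measurable_Rn_component, symmetric]
    integral_uniform_measure_component_eq_0[OF sets_voronoi neg_Rn_mem_voronoi_iff]
  by (simp add: distr_dither)

lemma expectation_dither_sq_norm:
  "expectation (\<lambda>\<omega>. \<Sum>i<n. (U \<omega> i)\<^sup>2) = real n * second_moment n (lattice n B)"
proof -
  have "expectation (\<lambda>\<omega>. \<Sum>i<n. (U \<omega> i)\<^sup>2)
      = (\<integral>x. (vnorm n x)\<^sup>2 \<partial>uniform_measure (Rn n) (voronoi n (lattice n B)))"
    using integral_distr[OF measurable_dither borel_measurable_sum_sq] by (simp add: distr_dither vnorm_sq)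
  then show ?thesis unfolding second_moment_def by (cases "n = 0") simp_all
qed

text \<open>The dither is rarely much shorter than \<open>\<surd>(n \<sigma>\<^sub>U^2)\<close> when the lattice is nearly
  optimal, and hence, by its mean, rarely much longer.\<close>
lemma prob_dither_sq_norm_gt_le:
  assumes n: "n > 0" and G: "NSM n (lattice n B) > 0" and \<gamma>: "0 \<le> \<gamma>" "\<gamma> < 1" and \<delta>: "\<delta> > 0"
  shows "prob {\<omega>\<in>space M. (\<Sum>i<n. (U \<omega> i)\<^sup>2) > (1 + \<delta>) * (real n * second_moment n (lattice n B))}
    \<le> (\<gamma> + ((1 - \<gamma>) * (2 * pi * exp 1 * NSM n (lattice n B))) powr (real n / 2)) / \<delta>"
proof -
  define m where "m = real n * second_moment n (lattice n B)"
  have m: "m > 0"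
    using G n cell_volume_pos by (simp add: m_def NSM_def zero_less_divide_iff)
  define A where "A = {x\<in>space (Rn n). (\<Sum>i<n. (x i)\<^sup>2) \<le> (1 - \<gamma>) * m}"
  have "{\<omega>\<in>space M. (\<Sum>i<n. (U \<omega> i)\<^sup>2) \<le> (1 - \<gamma>) * m} = {\<omega>\<in>space M. U \<omega> \<in> A}"
    unfolding A_def using measurable_space[OF measurable_dither] by auto
  also have "prob \<dots> \<le> (2 * pi * exp 1 * ((1 - \<gamma>) * m) / real n) powr (real n / 2) / cell_volume n (lattice n B)"
    unfolding A_def using m \<gamma> n by (intro prob_dither_in_le emeasure_ball_le) auto
  also have "\<dots> = ((1 - \<gamma>) * (2 * pi * exp 1 * NSM n (lattice n B))) powr (real n / 2)"
    unfolding m_def using n \<gamma> by (intro ball_volume_bound_div_cell_volume) auto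
  finally have "prob {\<omega>\<in>space M. (\<Sum>i<n. (U \<omega> i)\<^sup>2) \<le> (1 - \<gamma>) * m}
      \<le> ((1 - \<gamma>) * (2 * pi * exp 1 * NSM n (lattice n B))) powr (real n / 2)" .
  moreover have "prob {\<omega>\<in>space M. (\<Sum>i<n. (U \<omega> i)\<^sup>2) > (1 + \<delta>) * m}
      \<le> (\<gamma> + prob {\<omega>\<in>space M. (\<Sum>i<n. (U \<omega> i)\<^sup>2) \<le> (1 - \<gamma>) * m}) / \<delta>"
    using \<gamma> \<delta> m
    by (intro prob_above_mean_le integrable_dither_sq_norm) (auto simp: sum_nonneg m_def expectation_dither_sq_norm)
  ultimately show ?thesis
    unfolding m_def[symmetric] using \<delta> by (smt (verit) divide_right_mono)
qed

end

section \<open>Noise plus dither\<close>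

lemma sq_vnorm_lin_comb:
  "(vnorm n (restrict (\<lambda>i. \<alpha> * x i + \<beta> * y i) {..<n}))\<^sup>2
    = \<alpha>\<^sup>2 * (\<Sum>i<n. (x i)\<^sup>2) + \<beta>\<^sup>2 * (\<Sum>i<n. (y i)\<^sup>2) + 2 * (\<alpha> * \<beta>) * (\<Sum>i<n. x i * y i)"
proof -
  have "(vnorm n (restrict (\<lambda>i. \<alpha> * x i + \<beta> * y i) {..<n}))\<^sup>2
      = (\<Sum>i<n. \<alpha>\<^sup>2 * (x i)\<^sup>2 + \<beta>\<^sup>2 * (y i)\<^sup>2 + 2 * (\<alpha> * \<beta>) * (x i * y i))"
    unfolding vnorm_sq by (rule sum.cong) (auto simp: power2_eq_square algebra_simps)
  then show ?thesis by (simp add: sum.distrib sum_distrib_left)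
qed

text \<open>By AM-GM, \<open>2 |\<alpha> \<beta>| \<surd>X \<surd>Y \<le> \<alpha>^2 X + \<beta>^2 Y\<close>, so a cross term of relative size \<open>\<eta>\<close>
  costs at most a factor \<open>1 + \<eta>\<close>.\<close>
lemma lin_comb_sq_le:
  fixes a b c \<alpha> \<beta> \<eta> X Y :: real
  assumes a: "0 \<le> a" "a \<le> X" and b: "0 \<le> b" "b \<le> Y" and \<eta>: "\<eta> \<ge> 0"
    and c: "\<bar>c\<bar> \<le> \<eta> * sqrt a * sqrt Y"
  shows "\<alpha>\<^sup>2 * a + \<beta>\<^sup>2 * b + 2 * (\<alpha> * \<beta> * c) \<le> (1 + \<eta>) * (\<alpha>\<^sup>2 * X + \<beta>\<^sup>2 * Y)"
proof -
  have "\<alpha> * \<beta> * c \<le> \<bar>\<alpha> * \<beta>\<bar> * \<bar>c\<bar>"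
    by (simp only: abs_mult[symmetric] abs_ge_self)
  also have "\<dots> \<le> \<bar>\<alpha> * \<beta>\<bar> * (\<eta> * sqrt a * sqrt Y)"
    using c by (intro mult_left_mono) auto
  also have "\<dots> \<le> \<bar>\<alpha> * \<beta>\<bar> * (\<eta> * sqrt X * sqrt Y)"
    using a b \<eta> by (intro mult_left_mono mult_right_mono) auto
  also have "\<dots> = \<eta> * ((\<bar>\<alpha>\<bar> * sqrt X) * (\<bar>\<beta>\<bar> * sqrt Y))" by (simp add: abs_mult mult_ac)
  finally have cross: "\<alpha> * \<beta> * c \<le> \<eta> * ((\<bar>\<alpha>\<bar> * sqrt X) * (\<bar>\<beta>\<bar> * sqrt Y))" .
  have "0 \<le> (\<bar>\<alpha>\<bar> * sqrt X - \<bar>\<beta>\<bar> * sqrt Y)\<^sup>2" by simp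
  then have "2 * ((\<bar>\<alpha>\<bar> * sqrt X) * (\<bar>\<beta>\<bar> * sqrt Y)) \<le> \<alpha>\<^sup>2 * X + \<beta>\<^sup>2 * Y"
    using a b by (simp add: power2_diff power_mult_distrib)
  then have "\<eta> * (2 * ((\<bar>\<alpha>\<bar> * sqrt X) * (\<bar>\<beta>\<bar> * sqrt Y))) \<le> \<eta> * (\<alpha>\<^sup>2 * X + \<beta>\<^sup>2 * Y)"
    using \<eta> by (rule mult_left_mono)
  then have "2 * (\<alpha> * \<beta> * c) \<le> \<eta> * (\<alpha>\<^sup>2 * X + \<beta>\<^sup>2 * Y)"
    using cross by linarith
  moreover have "\<alpha>\<^sup>2 * a \<le> \<alpha>\<^sup>2 * X" "\<beta>\<^sup>2 * b \<le> \<beta>\<^sup>2 * Y"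
    using a b by (simp_all add: mult_left_mono)
  ultimately show ?thesis by (simp add: algebra_simps)
qed

locale noisy_voronoi_dither = voronoi_dither +
  fixes N :: "'a \<Rightarrow> nat \<Rightarrow> real" and \<alpha> \<beta> :: real
  assumes measurable_noise [measurable]: "N \<in> M \<rightarrow>\<^sub>M Rn n"
    and integrable_noise: "integrable M (\<lambda>\<omega>. (vnorm n (N \<omega>))\<^sup>2)"
    and indep_noise_dither: "indep_var (Rn n) N (Rn n) U"
begin

abbreviation Z :: "'a \<Rightarrow> nat \<Rightarrow> real" where
  "Z \<equiv> \<lambda>\<omega>. restrict (\<lambda>i. \<alpha> * N \<omega> i + \<beta> * U \<omega> i) {..<n}"

lemma measurable_Z: "Z \<in> M \<rightarrow>\<^sub>M Rn n"
proof -
  have "(\<lambda>\<omega>. \<alpha> * N \<omega> i + \<beta> * U \<omega> i) \<in> borel_measurable M" if i: "i < n" for i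
    using measurable_compose[OF measurable_noise measurable_Rn_component[OF i]]
      measurable_compose[OF measurable_dither measurable_Rn_component[OF i]]
    by (intro borel_measurable_add borel_measurable_times borel_measurable_const)
  then show ?thesis unfolding Rn_def by (intro measurable_restrict) auto
qed

lemma integrable_noise_sum_sq: "integrable M (\<lambda>\<omega>. \<Sum>i<n. (N \<omega> i)\<^sup>2)"
  using integrable_noise by (simp add: vnorm_sq)

lemma
  shows integrable_cross_term: "integrable M (\<lambda>\<omega>. \<Sum>i<n. N \<omega> i * U \<omega> i)"
    and expectation_cross_term: "expectation (\<lambda>\<omega>. \<Sum>i<n. N \<omega> i * U \<omega> i) = 0"
proof -
  have "integrable M (\<lambda>\<omega>. N \<omega> i * U \<omega> i) \<and> expectation (\<lambda>\<omega>. N \<omega> i * U \<omega> i) = 0" if i: "i < n" for i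
  proof -
    have "indep_var borel (\<lambda>\<omega>. N \<omega> i) borel (\<lambda>\<omega>. U \<omega> i)"
      using indep_var_compose[OF indep_noise_dither measurable_Rn_component[OF i]
          measurable_Rn_component[OF i]] by (simp add: comp_def)
    moreover note integrable_component_if_integrable_sum_sq[OF measurable_noise integrable_noise_sum_sq i]
      integrable_dither_component[OF i]
    ultimately have "integrable M (\<lambda>\<omega>. N \<omega> i * U \<omega> i)"
      and "expectation (\<lambda>\<omega>. N \<omega> i * U \<omega> i) = expectation (\<lambda>\<omega>. N \<omega> i) * expectation (\<lambda>\<omega>. U \<omega> i)"
      by (rule indep_var_integrable, rule indep_var_lebesgue_integral)
    then show ?thesis using expectation_dither_component[OF i] by simp
  qed
  then show "integrable M (\<lambda>\<omega>. \<Sum>i<n. N \<omega> i * U \<omega> i)"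
    and "expectation (\<lambda>\<omega>. \<Sum>i<n. N \<omega> i * U \<omega> i) = 0"
    by (auto simp: Bochner_Integration.integral_sum)
qed

lemma integrable_sq_vnorm_Z: "integrable M (\<lambda>\<omega>. (vnorm n (Z \<omega>))\<^sup>2)"
  unfolding sq_vnorm_lin_comb
  by (intro Bochner_Integration.integrable_add integrable_mult_right integrable_noise_sum_sq
      integrable_dither_sq_norm integrable_cross_term)

text \<open>The cross term has mean zero, so the effective variances add.\<close>
lemma eff_var_Z: "eff_var M n Z = \<alpha>\<^sup>2 * eff_var M n N + \<beta>\<^sup>2 * second_moment n (lattice n B)"
proof (cases "n = 0")
  case True then show ?thesis by (simp add: eff_var_def second_moment_def)
next
  case False
  have "expectation (\<lambda>\<omega>. (vnorm n (Z \<omega>))\<^sup>2)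
      = \<alpha>\<^sup>2 * expectation (\<lambda>\<omega>. \<Sum>i<n. (N \<omega> i)\<^sup>2) + \<beta>\<^sup>2 * (real n * second_moment n (lattice n B))"
    unfolding sq_vnorm_lin_comb
    by (simp add: Bochner_Integration.integral_add integrable_mult_right integrable_noise_sum_sq
        integrable_dither_sq_norm integrable_cross_term expectation_cross_term expectation_dither_sq_norm)
  then show ?thesis using False by (simp add: eff_var_def vnorm_sq field_simps)
qed

end

lemma sq_vnorm_lin_comb_le:
  assumes x: "(\<Sum>i<n. (x i)\<^sup>2) \<le> X" and y: "(\<Sum>i<n. (y i)\<^sup>2) \<le> Y" and \<eta>: "\<eta> \<ge> 0"
    and xy: "\<bar>\<Sum>i<n. x i * y i\<bar> \<le> \<eta> * vnorm n x * sqrt Y"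
  shows "(vnorm n (restrict (\<lambda>i. \<alpha> * x i + \<beta> * y i) {..<n}))\<^sup>2 \<le> (1 + \<eta>) * (\<alpha>\<^sup>2 * X + \<beta>\<^sup>2 * Y)"
  unfolding sq_vnorm_lin_comb
  using lin_comb_sq_le[OF _ x _ y \<eta>, of "\<Sum>i<n. x i * y i"] xy
  by (simp add: sum_nonneg vnorm_def mult.assoc)

context noisy_voronoi_dither
begin

lemma prob_cross_term_large_le:
  assumes n: "n > 0" and G: "NSM n (lattice n B) > 0" and \<eta>: "0 < \<eta>" "\<eta> < 1" and \<delta>: "\<delta> > 0"
  defines "R2 \<equiv> (1 + \<delta>) * (real n * second_moment n (lattice n B))"
  shows "prob {\<omega>\<in>space M. (\<Sum>i<n. (U \<omega> i)\<^sup>2) \<le> R2 \<and> \<eta> * vnorm n (N \<omega>) * sqrt R2 < \<bar>\<Sum>i<n. N \<omega> i * U \<omega> i\<bar>}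
    \<le> 2 * ((1 + \<delta>) * (1 - \<eta>\<^sup>2) * (2 * pi * exp 1 * NSM n (lattice n B))) powr (real n / 2)"
    (is "prob ?E \<le> ?c")
proof -
  have R2: "R2 > 0"
    using G n \<delta> cell_volume_pos by (simp add: R2_def NSM_def zero_less_divide_iff)
  define S where "S = {p \<in> space (Rn n \<Otimes>\<^sub>M Rn n). (\<Sum>i<n. (snd p i)\<^sup>2) \<le> R2
    \<and> \<eta> * vnorm n (fst p) * sqrt R2 < \<bar>\<Sum>i<n. fst p i * snd p i\<bar>}"
  have "?E = {\<omega>\<in>space M. (N \<omega>, U \<omega>) \<in> S}"
    using measurable_space[OF measurable_noise] measurable_space[OF measurable_dither]
    by (auto simp: S_def space_pair_measure)
  also have "prob \<dots> \<le> ?c"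
  proof (rule prob_indep_pair_le[OF measurable_noise measurable_dither indep_noise_dither])
    show "S \<in> sets (Rn n \<Otimes>\<^sub>M Rn n)" unfolding S_def vnorm_def Rn_def by measurable
    show "?c \<ge> 0" by simp
    fix v assume v: "v \<in> space (Rn n)"
    show "prob {\<omega>\<in>space M. (v, U \<omega>) \<in> S} \<le> ?c"
    proof (cases "vnorm n v = 0")
      case True
      then have "v i = 0" if "i < n" for i
        using that by (simp add: vnorm_def sum_nonneg_eq_0_iff)
      then have empty: "{\<omega>\<in>space M. (v, U \<omega>) \<in> S} = {}" by (simp add: S_def True)
      show ?thesis unfolding empty by simp
    next
      case False
      then have W: "vnorm n v > 0" by (simp add: vnorm_def sum_nonneg order_neq_le_trans)
      define w where "w i = v i / vnorm n v" for i
      have w: "(\<Sum>i<n. (w i)\<^sup>2) = 1"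
        using W vnorm_sq[of n v] by (simp add: w_def power_divide sum_divide_distrib[symmetric] flip: vnorm_sq)
      define A where "A = {x\<in>space (Rn n). (\<Sum>i<n. (x i)\<^sup>2) \<le> R2 \<and> \<eta> * sqrt R2 < \<bar>\<Sum>i<n. x i * w i\<bar>}"
      have inner: "\<bar>\<Sum>i<n. v i * x i\<bar> = vnorm n v * \<bar>\<Sum>i<n. x i * w i\<bar>" for x
        using W by (simp add: w_def sum_divide_distrib[symmetric] abs_mult mult.commute)
      have "{\<omega>\<in>space M. (v, U \<omega>) \<in> S} = {\<omega>\<in>space M. U \<omega> \<in> A}"
        using v W measurable_space[OF measurable_dither]
        by (auto simp: S_def A_def space_pair_measure inner mult.commute[of _ "vnorm n v"] mult.assoc)
      also have "prob \<dots> \<le> 2 * (2 * pi * exp 1 * (R2 - (\<eta> * sqrt R2)\<^sup>2) / real n) powr (real n / 2)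
          / cell_volume n (lattice n B)"
      proof (rule prob_dither_in_le)
        show "A \<in> sets (Rn n)" unfolding A_def Rn_def by measurable
        have "\<eta>\<^sup>2 < 1" using \<eta> by (simp add: abs_square_less_1)
        then have "(\<eta> * sqrt R2)\<^sup>2 < R2" using R2 by (simp add: power_mult_distrib)
        then show "emeasure (Rn n) A \<le> ennreal (2 * (2 * pi * exp 1 * (R2 - (\<eta> * sqrt R2)\<^sup>2) / real n) powr (real n / 2))"
          unfolding A_def using n w \<eta> R2 by (intro emeasure_ball_inter_slab_compl_le) auto
      qed simp
      also have "R2 - (\<eta> * sqrt R2)\<^sup>2 = (1 + \<delta>) * (1 - \<eta>\<^sup>2) * (real n * second_moment n (lattice n B))"
        using R2 by (simp add: R2_def power_mult_distrib algebra_simps)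
      also have "2 * (2 * pi * exp 1 * \<dots> / real n) powr (real n / 2) / cell_volume n (lattice n B) = ?c"
        using ball_volume_bound_div_cell_volume[OF n, of "(1 + \<delta>) * (1 - \<eta>\<^sup>2)"] \<eta> \<delta>
        by (simp add: power_le_one)
      finally show ?thesis .
    qed
  qed
  finally show ?thesis .
qed

lemma prob_Z_large_le:
  assumes n: "n > 0" and G: "NSM n (lattice n B) > 0" and \<eta>: "0 < \<eta>" "\<eta> < 1" and \<delta>': "\<delta>' > 0"
    and \<gamma>: "0 \<le> \<gamma>" "\<gamma> < 1" and \<delta>: "(1 + \<eta>) * (1 + \<delta>') \<le> 1 + \<delta>"
  shows "prob {\<omega>\<in>space M. vnorm n (Z \<omega>) > sqrt ((1 + \<delta>) * real n * eff_var M n Z)}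
    \<le> prob {\<omega>\<in>space M. vnorm n (N \<omega>) > sqrt ((1 + \<delta>') * real n * eff_var M n N)}
      + (\<gamma> + ((1 - \<gamma>) * (2 * pi * exp 1 * NSM n (lattice n B))) powr (real n / 2)) / \<delta>'
      + 2 * ((1 + \<delta>') * (1 - \<eta>\<^sup>2) * (2 * pi * exp 1 * NSM n (lattice n B))) powr (real n / 2)"
proof -
  define X where "X = (1 + \<delta>') * real n * eff_var M n N"
  define Y where "Y = (1 + \<delta>') * (real n * second_moment n (lattice n B))"
  define E1 where "E1 = {\<omega>\<in>space M. vnorm n (N \<omega>) > sqrt X}"
  define E2 where "E2 = {\<omega>\<in>space M. (\<Sum>i<n. (U \<omega> i)\<^sup>2) > Y}"
  define E3 where "E3 = {\<omega>\<in>space M. (\<Sum>i<n. (U \<omega> i)\<^sup>2) \<le> Y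
    \<and> \<eta> * vnorm n (N \<omega>) * sqrt Y < \<bar>\<Sum>i<n. N \<omega> i * U \<omega> i\<bar>}"
  have [measurable]: "(\<lambda>\<omega>. \<Sum>i<n. N \<omega> i * U \<omega> i) \<in> borel_measurable M"
    using integrable_cross_term by blast
  have events: "E1 \<in> events" "E2 \<in> events" "E3 \<in> events"
    unfolding E1_def E2_def E3_def by measurable
  have "{\<omega>\<in>space M. vnorm n (Z \<omega>) > sqrt ((1 + \<delta>) * real n * eff_var M n Z)} \<subseteq> E1 \<union> E2 \<union> E3"
  proof (intro subsetI, rule ccontr)
    fix \<omega> assume \<omega>: "\<omega> \<in> {\<omega>\<in>space M. vnorm n (Z \<omega>) > sqrt ((1 + \<delta>) * real n * eff_var M n Z)}"
      and "\<omega> \<notin> E1 \<union> E2 \<union> E3"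
    then have "(\<Sum>i<n. (N \<omega> i)\<^sup>2) \<le> X" "(\<Sum>i<n. (U \<omega> i)\<^sup>2) \<le> Y"
      "\<bar>\<Sum>i<n. N \<omega> i * U \<omega> i\<bar> \<le> \<eta> * vnorm n (N \<omega>) * sqrt Y"
      by (auto simp: E1_def E2_def E3_def vnorm_def)
    then have "(vnorm n (Z \<omega>))\<^sup>2 \<le> (1 + \<eta>) * (\<alpha>\<^sup>2 * X + \<beta>\<^sup>2 * Y)"
      using \<eta> by (intro sq_vnorm_lin_comb_le) auto
    also have "\<dots> = (1 + \<eta>) * (1 + \<delta>') * real n * eff_var M n Z"
      by (simp add: X_def Y_def eff_var_Z algebra_simps)
    also have "\<dots> \<le> (1 + \<delta>) * real n * eff_var M n Z"
      using \<delta> by (intro mult_right_mono) (auto simp: eff_var_def)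
    finally have "vnorm n (Z \<omega>) \<le> sqrt ((1 + \<delta>) * real n * eff_var M n Z)"
      by (rule real_le_rsqrt)
    then show False using \<omega> by simp
  qed
  then have "prob {\<omega>\<in>space M. vnorm n (Z \<omega>) > sqrt ((1 + \<delta>) * real n * eff_var M n Z)}
      \<le> prob (E1 \<union> E2 \<union> E3)"
    using events by (intro finite_measure_mono) auto
  also have "\<dots> \<le> prob E1 + prob E2 + prob E3"
    using measure_Un_le[of "E1 \<union> E2" M E3] measure_Un_le[of E1 M E2] events by auto
  finally show ?thesis
    using prob_dither_sq_norm_gt_le[OF n G \<gamma> \<delta>'] prob_cross_term_large_le[OF n G \<eta> \<delta>']
    unfolding E1_def E2_def E3_def X_def Y_def by linarith
qed

end

section \<open>Choosing the parameters\<close>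

lemma powr_half_tendsto_0:
  fixes x :: "nat \<Rightarrow> real"
  assumes lim: "x \<longlonglongrightarrow> c" and c: "c < 1" and nonneg: "\<And>n. x n \<ge> 0"
  shows "(\<lambda>n. x n powr (real n / 2)) \<longlonglongrightarrow> 0"
proof -
  define r where "r = (1 + max c 0) / 2"
  have r: "0 < r" "r < 1" "c < r" using c by (auto simp: r_def)
  have geometric: "(\<lambda>n. (r powr (1/2)) ^ n) \<longlonglongrightarrow> 0"
  proof (rule LIMSEQ_power_zero)
    have "r powr (1/2) < 1 powr (1/2)" using r by (intro powr_less_mono2) auto
    then show "norm (r powr (1/2)) < 1" using r by simp
  qed
  show ?thesis
  proof (rule tendsto_sandwich[OF _ _ tendsto_const geometric])
    show "eventually (\<lambda>n. x n powr (real n / 2) \<le> (r powr (1/2)) ^ n) sequentially"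
      using order_tendstoD(2)[OF lim r(3)]
    proof eventually_elim
      case (elim n)
      have "x n powr (real n / 2) \<le> r powr (real n / 2)"
        using elim nonneg[of n] by (intro powr_mono2) auto
      also have "\<dots> = (r powr (1/2)) ^ n" using r by (subst powr_power) auto
      finally show ?case .
    qed
  qed simp
qed

lemma eventually_powr_half_less:
  fixes q :: "nat \<Rightarrow> real"
  assumes q: "q \<longlonglongrightarrow> 1" and k: "0 \<le> k" "k < 1" and e: "e > 0"
  shows "eventually (\<lambda>n. q n > 0 \<longrightarrow> (k * q n) powr (real n / 2) < e) sequentially"
proof -
  have "(\<lambda>n. max 0 (k * q n)) \<longlonglongrightarrow> max 0 (k * 1)"
    by (intro tendsto_max tendsto_const tendsto_mult q)
  then have "(\<lambda>n. max 0 (k * q n) powr (real n / 2)) \<longlonglongrightarrow> 0"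
    by (rule powr_half_tendsto_0) (use k in auto)
  then have "eventually (\<lambda>n. max 0 (k * q n) powr (real n / 2) < e) sequentially"
    using e by (rule order_tendstoD)
  then show ?thesis
    by eventually_elim (use k in \<open>auto simp: max_def split: if_splits\<close>)
qed

text \<open>The choice \<open>\<eta> = min \<delta> 1 / 3\<close>, \<open>\<delta>' = \<eta>^2 / 2\<close> makes \<open>(1 + \<delta>') (1 - \<eta>^2) < 1\<close>, so the last
  term decays exponentially; \<open>\<gamma>\<close> is then taken small relative to \<open>\<epsilon> \<delta>'\<close>.\<close>
lemma eventually_le_of_tail_bound:
  fixes PZ PN :: "real \<Rightarrow> nat \<Rightarrow> real" and q :: "nat \<Rightarrow> real"
  assumes q: "q \<longlonglongrightarrow> 1"
    and PN: "\<forall>\<epsilon>>0. \<forall>\<delta>>0. eventually (\<lambda>n. PN \<delta> n \<le> \<epsilon>) sequentially"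
    and bound: "\<And>n \<delta> \<eta> \<delta>' \<gamma>. n > 0 \<Longrightarrow> q n > 0 \<Longrightarrow> 0 < \<eta> \<Longrightarrow> \<eta> < 1 \<Longrightarrow> \<delta>' > 0 \<Longrightarrow> 0 \<le> \<gamma>
      \<Longrightarrow> \<gamma> < 1 \<Longrightarrow> (1 + \<eta>) * (1 + \<delta>') \<le> 1 + \<delta>
      \<Longrightarrow> PZ \<delta> n \<le> PN \<delta>' n + (\<gamma> + ((1 - \<gamma>) * q n) powr (real n / 2)) / \<delta>'
            + 2 * ((1 + \<delta>') * (1 - \<eta>\<^sup>2) * q n) powr (real n / 2)"
  shows "\<forall>\<epsilon>>0. \<forall>\<delta>>0. eventually (\<lambda>n. PZ \<delta> n \<le> \<epsilon>) sequentially"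
proof (intro allI impI)
  fix \<epsilon> \<delta> :: real assume \<epsilon>: "\<epsilon> > 0" and \<delta>: "\<delta> > 0"
  define \<eta> where "\<eta> = min \<delta> 1 / 3"
  define \<delta>' where "\<delta>' = \<eta>\<^sup>2 / 2"
  define \<gamma> where "\<gamma> = min (1/2) (\<epsilon> * \<delta>' / 6)"
  have \<eta>: "0 < \<eta>" "\<eta> < 1" "3 * \<eta> \<le> \<delta>" using \<delta> by (auto simp: \<eta>_def)
  have \<delta>': "\<delta>' > 0" "\<delta>' \<le> \<eta>" using \<eta> by (auto simp: \<delta>'_def power2_eq_square)
  have \<gamma>: "0 < \<gamma>" "\<gamma> < 1" "\<gamma> \<le> \<epsilon> * \<delta>' / 6" using \<epsilon> \<delta>' by (auto simp: \<gamma>_def)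
  have "(1 + \<eta>) * (1 + \<delta>') \<le> (1 + \<eta>) * (1 + \<eta>)" using \<eta> \<delta>' by (intro mult_left_mono) auto
  also have "\<dots> = 1 + 2 * \<eta> + \<eta> * \<eta>" by (simp add: algebra_simps)
  also have "\<dots> \<le> 1 + \<delta>" using \<eta> mult_left_le_one_le[of \<eta> \<eta>] by linarith
  finally have \<delta>\<delta>': "(1 + \<eta>) * (1 + \<delta>') \<le> 1 + \<delta>" .
  have \<eta>2: "0 < \<eta>\<^sup>2" "\<eta>\<^sup>2 < 1" using \<eta> by (auto simp: abs_square_less_1)
  then have "0 \<le> \<eta>\<^sup>2 * \<eta>\<^sup>2" "\<eta>\<^sup>2 * \<eta>\<^sup>2 \<le> 1"
    by (simp, intro mult_le_one) auto
  moreover have "(1 + \<delta>') * (1 - \<eta>\<^sup>2) = 1 - \<eta>\<^sup>2 / 2 - \<eta>\<^sup>2 * \<eta>\<^sup>2 / 2"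
    by (simp add: \<delta>'_def field_simps)
  ultimately have k: "0 \<le> (1 + \<delta>') * (1 - \<eta>\<^sup>2)" "(1 + \<delta>') * (1 - \<eta>\<^sup>2) < 1"
    using \<eta>2 by linarith+
  have "eventually (\<lambda>n. n > 0) sequentially" by (rule eventually_gt_at_top)
  moreover have "eventually (\<lambda>n. q n > 0) sequentially" using q by (rule order_tendstoD) simp
  moreover have "eventually (\<lambda>n. PN \<delta>' n \<le> \<epsilon> / 3) sequentially"
    using PN \<epsilon> \<delta>' by (meson zero_less_divide_iff zero_less_numeral)
  moreover have "eventually (\<lambda>n. q n > 0 \<longrightarrow> ((1 - \<gamma>) * q n) powr (real n / 2) < \<epsilon> * \<delta>' / 6) sequentially"
    using \<gamma> \<epsilon> \<delta>' by (intro eventually_powr_half_less q) auto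
  moreover have "eventually (\<lambda>n. q n > 0 \<longrightarrow> ((1 + \<delta>') * (1 - \<eta>\<^sup>2) * q n) powr (real n / 2) < \<epsilon> / 6) sequentially"
    using \<epsilon> by (intro eventually_powr_half_less q k) auto
  ultimately show "eventually (\<lambda>n. PZ \<delta> n \<le> \<epsilon>) sequentially"
  proof eventually_elim
    case (elim n)
    have "(\<gamma> + ((1 - \<gamma>) * q n) powr (real n / 2)) / \<delta>' \<le> (\<epsilon> * \<delta>' / 3) / \<delta>'"
      using elim \<gamma> \<delta>' by (intro divide_right_mono) auto
    then have "(\<gamma> + ((1 - \<gamma>) * q n) powr (real n / 2)) / \<delta>' \<le> \<epsilon> / 3" using \<delta>' by simp
    then show ?case
      using bound[OF elim(1,2) \<eta>(1,2) \<delta>'(1) less_imp_le[OF \<gamma>(1)] \<gamma>(2) \<delta>\<delta>'] elim by linarith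
  qed
qed

theorem lemma5:
  fixes M :: "nat \<Rightarrow> 'a measure"
    and N U :: "nat \<Rightarrow> 'a \<Rightarrow> nat \<Rightarrow> real"
    and B :: "nat \<Rightarrow> nat \<Rightarrow> nat \<Rightarrow> real"
    and \<alpha> \<beta> :: real
  assumes "\<And>n. prob_space (M n)"
    and "semi_norm_ergodic M N"
    and "good_for_MSE B"
    and "\<And>n. U n \<in> M n \<rightarrow>\<^sub>M Rn n"
    and "\<And>n. distr (M n) (Rn n) (U n) = uniform_measure (Rn n) (voronoi n (lattice n (B n)))"
    and "\<And>n. prob_space.indep_var (M n) (Rn n) (N n) (Rn n) (U n)"
  shows "semi_norm_ergodic M (\<lambda>n \<omega>. restrict (\<lambda>i. \<alpha> * N n \<omega> i + \<beta> * U n \<omega> i) {..<n})"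
proof -
  note noise = assms(2)[unfolded semi_norm_ergodic_def]
  have dither: "noisy_voronoi_dither (M n) n (B n) (U n) (N n)" for n
    using assms(1,3-6) noise
    by (simp add: noisy_voronoi_dither_def noisy_voronoi_dither_axioms_def voronoi_dither_def
        voronoi_dither_axioms_def good_for_MSE_def)
  have "(\<lambda>n. 2 * pi * exp 1 * NSM n (lattice n (B n))) \<longlonglongrightarrow> 2 * pi * exp 1 * (1 / (2 * pi * exp 1))"
    using assms(3) by (intro tendsto_mult_left) (simp add: good_for_MSE_def)
  then have q: "(\<lambda>n. 2 * pi * exp 1 * NSM n (lattice n (B n))) \<longlonglongrightarrow> 1" by simp
  show ?thesis
    unfolding semi_norm_ergodic_def
    using noisy_voronoi_dither.measurable_Z[OF dither] noisy_voronoi_dither.integrable_sq_vnorm_Z[OF dither]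
    by (intro conjI allI eventually_le_of_tail_bound[OF q noise[THEN conjunct2]]
        noisy_voronoi_dither.prob_Z_large_le[OF dither])
      (auto simp: zero_less_mult_iff mult_less_0_iff pi_gt_zero)
qed

end
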